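(* Let $\lambda\in(1,2)$. The map sending a sequence $(a_j)_{j=1}^\infty\in\{0,1\}^{\mathbb{N}}$ to the $S$-gap shift $X(S)$ with $S=\{j-1: a_j=1\}$ is a bijection between the set of sequences $(a_j)_{j=1}^\infty\in\{0,1\}^{\mathbb{N}}$ satisfying $\sum_{j=1}^\infty a_j\lambda^{-j}=1$ and the set of $S$-gap shifts with entropy $\log\lambda$.
   Context: For a nonempty set $S\subseteq\{0,1,2,\dots\}$, the $S$-gap shift $X(S)\subseteq\{0,1\}^{\mathbb{Z}}$ is the set of bi-infinite binary sequences in which the number of consecutive zeros between ones is always an element of $S$ (points have the form $\cdots10^{n_{-1}}10^{n_0}10^{n_1}\cdots$ with $n_j\in S$). The entropy of a shift $X$ is $h(X)=\lim_n\frac1n\log|\mathcal{B}_n(X)|$, where $\mathcal{B}_n(X)$ is the set of words of length $n$ occurring in points of $X$ and $\log$ is to base $2$. *)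

theory Defs
  imports Complex_Main
begin

text \<open>Points of the full shift on {0,1}: bi-infinite sequences, True = 1, False = 0.\<close>

text \<open>Points of the explicit form ...1 0^{n_{-1}} 1 0^{n_0} 1 0^{n_1} ... with all n_j in S:
  ones occur unboundedly in both directions and every gap between consecutive ones
  has length in S.\<close>
definition gap_points :: "nat set \<Rightarrow> (int \<Rightarrow> bool) set" where
  "gap_points S = {x. (\<forall>m. \<exists>i>m. x i) \<and> (\<forall>m. \<exists>i<m. x i) \<and>
     (\<forall>i k. i < k \<and> x i \<and> x k \<and> (\<forall>j. i < j \<and> j < k \<longrightarrow> \<not> x j)
            \<longrightarrow> nat (k - i - 1) \<in> S)}"

definition window :: "(int \<Rightarrow> bool) \<Rightarrow> int \<Rightarrow> nat \<Rightarrow> bool list" where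
  "window x i n = map (\<lambda>j. x (i + int j)) [0..<n]"

definition words :: "nat \<Rightarrow> (int \<Rightarrow> bool) set \<Rightarrow> bool list set" where
  "words n X = {w. \<exists>x\<in>X. \<exists>i. w = window x i n}"

text \<open>The S-gap shift X(S): the closure (in the product topology) of gap_points S,
  i.e. all points every finite window of which occurs in a point of gap_points S.\<close>
definition gap_shift :: "nat set \<Rightarrow> (int \<Rightarrow> bool) set" where
  "gap_shift S = {x. \<forall>i n. window x i n \<in> words n (gap_points S)}"

definition entropy :: "(int \<Rightarrow> bool) set \<Rightarrow> real" where
  "entropy X = lim (\<lambda>n. log 2 (real (card (words n X))) / real n)"

end

theory Submission
  imports Defs "HOL-Library.Sublist" "HOL-Real_Asymp.Real_Asymp"
begin

text \<open>
  Read a point of X(S) as a concatenation of blocks 0^s 1 with s \<in> S. Every word of length n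
  is 0^n or 0^a 1 v where v can follow a one; counting such v recursively gives
  |B_n| \<le> (n + 1)^2 x^n as soon as every finite sum of x^-(s+1) over s \<in> S is at most 1.
  Conversely, the prefixes of concatenations of blocks from a finite F \<subseteq> S give
  y^n \<le> |B_n| y^(max F) whenever the sum of y^-(s+1) over F is at least 1.
  So h(X(S)) = log \<mu>, where \<mu> is the supremum of those y for which some finite partial sum reaches 1.
  As y \<mapsto> \<Sum>s\<in>S. y^-(s+1) is continuous and strictly decreasing on (1, \<infinity>), for \<lambda> > 1 we get
  \<mu> = \<lambda> exactly when this series equals 1 at \<lambda>. Finally S is recovered from X(S) as the set of
  those s for which 1 0^s 1 is a word of X(S).
\<close>

definition gap_word :: "nat set \<Rightarrow> bool list \<Rightarrow> bool" where
  "gap_word S w \<longleftrightarrow> (\<forall>p k. p < k \<and> k < length w \<and> w!p \<and> w!k \<and> (\<forall>j. p < j \<and> j < k \<longrightarrow> \<not> w!j)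
     \<longrightarrow> k - p - 1 \<in> S)"

inductive blocks :: "nat set \<Rightarrow> bool list \<Rightarrow> bool" for S where
  blocks_Nil: "blocks S []"
| blocks_Cons: "s \<in> S \<Longrightarrow> blocks S c \<Longrightarrow> blocks S (replicate s False @ True # c)"

lemma nth_block:
  "(replicate s False @ True # c) ! j = (if j < s then False else if j = s then True else c ! (j - Suc s))"
  by (auto simp: nth_append nth_Cons')

lemma block_eq_iff [simp]:
  "replicate s False @ True # v = replicate s' False @ True # v' \<longleftrightarrow> s = s' \<and> v = v'"
proof (induction s arbitrary: s')
  case 0 then show ?case by (cases s') auto
next
  case (Suc s) then show ?case by (cases s') auto
qed

lemma replicate_False_if_no_True: "True \<notin> set v \<Longrightarrow> v = replicate (length v) False"
  by (metis (full_types) replicate_length_same)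

lemma blocks_append: "blocks S c \<Longrightarrow> blocks S d \<Longrightarrow> blocks S (c @ d)"
  by (induction rule: blocks.induct) (auto intro: blocks.intros)

lemma blocks_mono: "blocks F c \<Longrightarrow> F \<subseteq> S \<Longrightarrow> blocks S c"
  by (induction rule: blocks.induct) (auto intro: blocks.intros)

lemma blocks_first_one:
  "blocks S c \<Longrightarrow> c \<noteq> [] \<Longrightarrow> \<exists>s\<in>S. s < length c \<and> c!s \<and> (\<forall>j<s. \<not> c!j)"
  by (induction rule: blocks.induct) (auto simp: nth_block)

lemma blocks_last: "blocks S c \<Longrightarrow> c \<noteq> [] \<Longrightarrow> c ! (length c - 1)"
  by (induction rule: blocks.induct) (auto simp: nth_block blocks_first_one)

lemma blocks_next_one:
  assumes "blocks S c" "p < length c" "c!p"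
  shows "p = length c - 1 \<or>
    (\<exists>s\<in>S. p + s + 1 < length c \<and> c!(p + s + 1) \<and> (\<forall>j. p < j \<and> j < p + s + 1 \<longrightarrow> \<not> c!j))"
  using assms
proof (induction arbitrary: p rule: blocks.induct)
  case blocks_Nil then show ?case by simp
next
  case (blocks_Cons s c)
  let ?L = "replicate s False @ True # c"
  have "s \<le> p" using blocks_Cons.prems by (auto simp: nth_block split: if_splits)
  show ?case
  proof (cases "p = s")
    case True
    show ?thesis
    proof (cases "c = []")
      case False
      then obtain s' where "s' \<in> S" "s' < length c" "c!s'" "\<forall>j<s'. \<not> c!j"
        using blocks_first_one[OF blocks_Cons.hyps(2)] by blast
      moreover have "\<forall>j. p < j \<and> j < p + s' + 1 \<longrightarrow> \<not> ?L!j"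
        using \<open>\<forall>j<s'. \<not> c!j\<close> True by (auto simp: nth_block)
      moreover have "p + s' + 1 < length ?L" "?L!(p + s' + 1)"
        using \<open>s' < length c\<close> \<open>c!s'\<close> True by (simp_all add: nth_block)
      ultimately show ?thesis by blast
    qed (use True in simp)
  next
    case False
    define p' where "p' = p - Suc s"
    have p: "p = p' + Suc s" using False \<open>s \<le> p\<close> p'_def by simp
    have "p' < length c" "c!p'" using blocks_Cons.prems p by (auto simp: nth_block)
    from blocks_Cons.IH[OF this] show ?thesis
    proof
      assume "p' = length c - 1"
      then show ?thesis using p \<open>p' < length c\<close> by auto
    next
      assume "\<exists>s'\<in>S. p' + s' + 1 < length c \<and> c!(p' + s' + 1) \<and> (\<forall>j. p' < j \<and> j < p' + s' + 1 \<longrightarrow> \<not> c!j)"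
      then obtain s' where s': "s' \<in> S" "p' + s' + 1 < length c" "c!(p' + s' + 1)"
        "\<forall>j. p' < j \<and> j < p' + s' + 1 \<longrightarrow> \<not> c!j" by blast
      have "\<forall>j. p < j \<and> j < p + s' + 1 \<longrightarrow> \<not> ?L!j"
      proof (intro allI impI)
        fix j assume j: "p < j \<and> j < p + s' + 1"
        then have "p' < j - Suc s \<and> j - Suc s < p' + s' + 1" using p by linarith
        then show "\<not> ?L!j" using j p s'(4) by (simp add: nth_block)
      qed
      moreover have "p + s' + 1 < length ?L" "?L!(p + s' + 1)" using s' p by (simp_all add: nth_block)
      ultimately show ?thesis using s'(1) by blast
    qed
  qed
qed

definition periodic_point :: "bool list \<Rightarrow> int \<Rightarrow> bool" where
  "periodic_point c i = c ! nat (i mod int (length c))"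

lemma periodic_point_eq: "r < length c \<Longrightarrow> periodic_point c (int (length c) * q + int r) = c ! r"
  unfolding periodic_point_def by (simp add: add.commute)

lemma periodic_point_double:
  assumes "m < 2 * length c"
  shows "periodic_point c (int (length c) * q + int m) = (c @ c) ! m"
proof (cases "m < length c")
  case True then show ?thesis by (simp add: periodic_point_eq nth_append)
next
  case False
  have e: "int (length c) * q + int m = int (length c) * (q + 1) + int (m - length c)"
    using False by (simp add: algebra_simps of_nat_diff)
  have "periodic_point c (int (length c) * q + int m) = c ! (m - length c)"
    unfolding e by (rule periodic_point_eq) (use False assms in simp)
  then show ?thesis using False by (simp add: nth_append)
qed

lemma int_eq_length_mult_div_plus_mod:
  "c \<noteq> [] \<Longrightarrow> i = int (length c) * (i div int (length c)) + int (nat (i mod int (length c)))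
    \<and> nat (i mod int (length c)) < length c"
  by (simp add: nat_less_iff)

lemma periodic_point_ones_unbounded:
  assumes "r < length c" "c ! r"
  shows "\<forall>m. \<exists>i>m. periodic_point c i" "\<forall>m. \<exists>i<m. periodic_point c i"
proof -
  let ?L = "int (length c)"
  have L: "1 \<le> ?L" using assms(1) by simp
  show "\<forall>m. \<exists>i>m. periodic_point c i"
  proof
    fix m :: int
    have "\<bar>m\<bar> + 1 \<le> ?L * (\<bar>m\<bar> + 1)" using L by simp
    then have "m < ?L * (\<bar>m\<bar> + 1) + int r" by linarith
    then show "\<exists>i>m. periodic_point c i" using assms by (metis periodic_point_eq)
  qed
  show "\<forall>m. \<exists>i<m. periodic_point c i"
  proof
    fix m :: int
    have "?L * (- \<bar>m\<bar>) \<le> - \<bar>m\<bar>" using L by (simp add: mult_le_cancel_right1)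
    then have "?L * (- \<bar>m\<bar> - 1) + int r < m" using assms(1) by (simp add: algebra_simps)
    then show "\<exists>i<m. periodic_point c i" using assms by (metis periodic_point_eq)
  qed
qed

lemma gap_pointsI:
  assumes "\<forall>m. \<exists>i>m. x i" "\<forall>m. \<exists>i<m. x i"
    and "\<And>i. x i \<Longrightarrow> \<exists>s\<in>S. x (i + int s + 1) \<and> (\<forall>j. i < j \<and> j < i + int s + 1 \<longrightarrow> \<not> x j)"
  shows "x \<in> gap_points S"
  unfolding gap_points_def
proof (intro CollectI conjI assms(1,2) allI impI)
  fix i k assume h: "i < k \<and> x i \<and> x k \<and> (\<forall>j. i < j \<and> j < k \<longrightarrow> \<not> x j)"
  then obtain s where s: "s \<in> S" "x (i + int s + 1)" "\<forall>j. i < j \<and> j < i + int s + 1 \<longrightarrow> \<not> x j"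
    using assms(3) by blast
  have "k = i + int s + 1"
  proof (rule ccontr)
    assume "k \<noteq> i + int s + 1"
    then consider "k < i + int s + 1" | "i + int s + 1 < k" by linarith
    then show False
    proof cases
      case 1 then show False using h s(3) by blast
    next
      case 2 then show False using h s(2) by force
    qed
  qed
  then show "nat (k - i - 1) \<in> S" using s by simp
qed

lemma periodic_point_in_gap_points:
  assumes c: "blocks S c" "c \<noteq> []"
  shows "periodic_point c \<in> gap_points S"
proof -
  define L where "L = length c"
  have last: "c ! (L - 1)" "L - 1 < L" using blocks_last[OF c] c(2) L_def by auto
  \<comment> \<open>In c @ c the next one after any position of c is visible, also across the period boundary.\<close>
  have cc: "blocks S (c @ c)" using blocks_append[OF c(1) c(1)] .
  show ?thesis
  proof (rule gap_pointsI)
    show "\<forall>m. \<exists>i>m. periodic_point c i" "\<forall>m. \<exists>i<m. periodic_point c i"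
      using periodic_point_ones_unbounded[OF last(2)[unfolded L_def] last(1)[unfolded L_def]] by auto
  next
    fix i assume xi: "periodic_point c i"
    define q where "q = i div int L"
    define r where "r = nat (i mod int L)"
    have ir: "i = int L * q + int r" "r < L"
      using int_eq_length_mult_div_plus_mod[OF c(2), of i] L_def q_def r_def by auto
    have "(c @ c) ! r" using xi ir periodic_point_double[of r c q] L_def by simp
    moreover have "r \<noteq> length (c @ c) - 1" using ir(2) L_def by simp
    ultimately obtain s where s: "s \<in> S" "r + s + 1 < 2 * L"
      "(c @ c) ! (r + s + 1)" "\<forall>j. r < j \<and> j < r + s + 1 \<longrightarrow> \<not> (c @ c) ! j"
      using blocks_next_one[OF cc, of r] ir(2) L_def by auto
    have e: "i + int s + 1 = int L * q + int (r + s + 1)" using ir(1) by simp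
    have "periodic_point c (i + int s + 1)"
      unfolding e using periodic_point_double[of "r + s + 1" c q] s(2,3) L_def by simp
    moreover have "\<not> periodic_point c j" if j: "i < j" "j < i + int s + 1" for j
    proof -
      define t where "t = nat (j - int L * q)"
      have "j = int L * q + int t" "r < t" "t < r + s + 1" using j ir unfolding t_def by auto
      then show ?thesis using periodic_point_double[of t c q] s(2,4) L_def by simp
    qed
    ultimately show "\<exists>s\<in>S. periodic_point c (i + int s + 1)
        \<and> (\<forall>j. i < j \<and> j < i + int s + 1 \<longrightarrow> \<not> periodic_point c j)"
      using s(1) by blast
  qed
qed

lemma window_periodic_point:
  "i + n \<le> length c \<Longrightarrow> window (periodic_point c) (int i) n = take n (drop i c)"
  unfolding window_def
  by (rule nth_equalityI)
    (auto simp: periodic_point_eq[of _ c 0, simplified] simp flip: of_nat_add)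

lemma blocks_factor_in_words:
  assumes "blocks S c" "c \<noteq> []" "i + n \<le> length c"
  shows "take n (drop i c) \<in> words n (gap_points S)"
  unfolding words_def mem_Collect_eq
  using periodic_point_in_gap_points[OF assms(1,2)] window_periodic_point[OF assms(3), symmetric] by blast

lemma gap_word_window: "x \<in> gap_points S \<Longrightarrow> gap_word S (window x i n)"
  unfolding gap_word_def
proof (intro allI impI)
  fix p k assume x: "x \<in> gap_points S"
    and h: "p < k \<and> k < length (window x i n) \<and> window x i n ! p \<and> window x i n ! k \<and>
      (\<forall>j. p < j \<and> j < k \<longrightarrow> \<not> window x i n ! j)"
  have kn: "k < n" using h by (simp add: window_def)
  have ones: "x (i + int p)" "x (i + int k)" using h kn by (auto simp: window_def)
  have between: "\<not> x j" if "i + int p < j" "j < i + int k" for j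
  proof -
    define t where "t = nat (j - i)"
    have "j = i + int t" "p < t" "t < k" using that unfolding t_def by auto
    then show ?thesis using h kn by (simp add: window_def)
  qed
  have "\<forall>i k. i < k \<and> x i \<and> x k \<and> (\<forall>j. i < j \<and> j < k \<longrightarrow> \<not> x j) \<longrightarrow> nat (k - i - 1) \<in> S"
    using x unfolding gap_points_def by blast
  then have "nat ((i + int k) - (i + int p) - 1) \<in> S"
    by (elim allE[of _ "i + int p"] allE[of _ "i + int k"]) (use ones between h in auto)
  then show "k - p - 1 \<in> S" using h by (simp add: nat_diff_distrib)
qed

lemma gap_word_drop: "gap_word S w \<Longrightarrow> gap_word S (drop m w)"
  unfolding gap_word_def
proof (intro allI impI)
  fix p k
  assume g: "\<forall>p k. p < k \<and> k < length w \<and> w ! p \<and> w ! k \<and> (\<forall>j. p < j \<and> j < k \<longrightarrow> \<not> w ! j)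
      \<longrightarrow> k - p - 1 \<in> S"
    and h: "p < k \<and> k < length (drop m w) \<and> drop m w ! p \<and> drop m w ! k \<and>
      (\<forall>j. p < j \<and> j < k \<longrightarrow> \<not> drop m w ! j)"
  have "\<not> w ! j" if "m + p < j" "j < m + k" for j
  proof -
    have "p < j - m \<and> j - m < k" using that by linarith
    then have "\<not> w ! (m + (j - m))" using h by auto
    moreover have "m + (j - m) = j" using that by simp
    ultimately show ?thesis by simp
  qed
  then have "(m + k) - (m + p) - 1 \<in> S" using g[rule_format, of "m + p" "m + k"] h by auto
  then show "k - p - 1 \<in> S" by simp
qed

lemma gap_word_block_split:
  assumes "gap_word S (True # replicate s False @ True # v)"
  shows "s \<in> S" "gap_word S (True # v)"
proof -
  let ?w = "True # replicate s False @ True # v"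
  have g: "\<forall>p k. p < k \<and> k < length ?w \<and> ?w!p \<and> ?w!k \<and> (\<forall>j. p < j \<and> j < k \<longrightarrow> \<not> ?w!j)
      \<longrightarrow> k - p - 1 \<in> S"
    using assms unfolding gap_word_def by blast
  have zeros: "\<forall>j. 0 < j \<and> j < Suc s \<longrightarrow> \<not> ?w ! j"
  proof (intro allI impI)
    fix j :: nat assume "0 < j \<and> j < Suc s"
    then show "\<not> ?w ! j" by (cases j) (auto simp: nth_block)
  qed
  have "?w ! Suc s" by (simp add: nth_block)
  then have "Suc s - 0 - 1 \<in> S" using g[rule_format, of 0 "Suc s"] zeros by simp
  then show "s \<in> S" by simp
  show "gap_word S (True # v)" using gap_word_drop[OF assms, of "Suc s"] by simp
qed

lemma gap_word_cases:
  assumes "gap_word S w"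
  obtains "w = replicate (length w) False"
  | a v where "w = replicate a False @ True # v" "gap_word S (True # v)"
proof (cases "True \<in> set w")
  case False then show ?thesis using that(1) replicate_False_if_no_True by blast
next
  case True
  then obtain u v where w: "w = u @ True # v" "True \<notin> set u" by (metis split_list_first)
  then have u: "u = replicate (length u) False" using replicate_False_if_no_True by blast
  have "drop (length u) w = True # v" using w by simp
  then show ?thesis using that(2) gap_word_drop[OF assms, of "length u"] w u by metis
qed

lemma finite_bool_lists_length: "finite {w :: bool list. length w = n}"
  using finite_lists_length_eq[of "UNIV :: bool set" n] by simp

lemma finite_words: "finite (words n X)"
  by (rule finite_subset[OF _ finite_bool_lists_length]) (auto simp: words_def window_def)

lemma words_gap_shift: "words n (gap_shift S) = words n (gap_points S)"
proof
  have "gap_points S \<subseteq> gap_shift S"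
    unfolding gap_shift_def words_def by blast
  then show "words n (gap_points S) \<subseteq> words n (gap_shift S)"
    unfolding words_def by blast
  show "words n (gap_shift S) \<subseteq> words n (gap_points S)"
    unfolding words_def gap_shift_def by blast
qed

lemma words_gap_points_nonempty:
  assumes "s \<in> S"
  shows "words n (gap_points S) \<noteq> {}"
proof -
  have "blocks S (replicate s False @ [True])" using assms by (intro blocks.intros)
  then have "periodic_point (replicate s False @ [True]) \<in> gap_points S"
    by (rule periodic_point_in_gap_points) simp
  then show ?thesis unfolding words_def by blast
qed

lemma block_word_in_words_iff:
  "True # replicate s False @ [True] \<in> words (s + 2) (gap_shift S) \<longleftrightarrow> s \<in> S"
proof
  assume "True # replicate s False @ [True] \<in> words (s + 2) (gap_shift S)"
  then obtain x i where "x \<in> gap_points S" "True # replicate s False @ [True] = window x i (s + 2)"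
    unfolding words_gap_shift unfolding words_def by blast
  then have "gap_word S (True # replicate s False @ True # [])" using gap_word_window by metis
  then show "s \<in> S" by (rule gap_word_block_split(1))
next
  assume s: "s \<in> S"
  define c where "c = replicate s False @ True # replicate s False @ [True]"
  have "blocks S c" unfolding c_def using s by (intro blocks.intros)
  then have "take (s + 2) (drop s c) \<in> words (s + 2) (gap_points S)"
    by (rule blocks_factor_in_words) (simp_all add: c_def)
  moreover have "take (s + 2) (drop s c) = True # replicate s False @ [True]"
    by (simp add: c_def)
  ultimately show "True # replicate s False @ [True] \<in> words (s + 2) (gap_shift S)"
    by (simp add: words_gap_shift)
qed

lemma inj_gap_shift: "inj gap_shift"
proof (rule injI)
  fix S S' assume "gap_shift S = gap_shift S'"
  then show "S = S'" by (metis block_word_in_words_iff subsetI subset_antisym)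
qed

subsection \<open>Upper bound on the number of words\<close>

definition gap_suffixes :: "nat set \<Rightarrow> nat \<Rightarrow> bool list set" where
  "gap_suffixes S m = {v. length v = m \<and> gap_word S (True # v)}"

lemma finite_gap_suffixes: "finite (gap_suffixes S m)"
  by (rule finite_subset[OF _ finite_bool_lists_length[of m]]) (auto simp: gap_suffixes_def)

lemma gap_suffixes_subset:
  "gap_suffixes S m \<subseteq> insert (replicate m False)
     (\<Union>s\<in>{s\<in>S. s < m}. (\<lambda>v. replicate s False @ True # v) ` gap_suffixes S (m - Suc s))"
proof
  fix v assume "v \<in> gap_suffixes S m"
  then have v: "length v = m" "gap_word S (True # v)" by (auto simp: gap_suffixes_def)
  from gap_word_drop[OF v(2), of 1] have "gap_word S v" by simp
  then show "v \<in> insert (replicate m False)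
     (\<Union>s\<in>{s\<in>S. s < m}. (\<lambda>v. replicate s False @ True # v) ` gap_suffixes S (m - Suc s))"
  proof (cases rule: gap_word_cases)
    case 1 then show ?thesis using v by simp
  next
    case (2 s v')
    then have "s \<in> S" "s < m" "v' \<in> gap_suffixes S (m - Suc s)"
      using v gap_word_block_split[of S s v'] by (auto simp: gap_suffixes_def)
    then show ?thesis using 2 by blast
  qed
qed

lemma words_subset_gap_suffixes:
  "words n (gap_points S) \<subseteq> insert (replicate n False)
     (\<Union>a<n. (\<lambda>v. replicate a False @ True # v) ` gap_suffixes S (n - Suc a))"
proof
  fix w assume "w \<in> words n (gap_points S)"
  then obtain x i where "x \<in> gap_points S" "w = window x i n" unfolding words_def by blast
  then have w: "length w = n" "gap_word S w" using gap_word_window by (auto simp: window_def)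
  from w(2) show "w \<in> insert (replicate n False)
     (\<Union>a<n. (\<lambda>v. replicate a False @ True # v) ` gap_suffixes S (n - Suc a))"
  proof (cases rule: gap_word_cases)
    case 1 then show ?thesis using w by simp
  next
    case (2 a v)
    then have "a < n" "v \<in> gap_suffixes S (n - Suc a)" using w by (auto simp: gap_suffixes_def)
    then show ?thesis using 2 by blast
  qed
qed

lemma card_insert_blocks_le:
  assumes "finite A" "\<And>s. finite (B s)"
  shows "card (insert u (\<Union>s\<in>A. (\<lambda>v. replicate s False @ True # v) ` B s)) \<le> Suc (\<Sum>s\<in>A. card (B s))"
proof -
  let ?U = "\<Union>s\<in>A. (\<lambda>v. replicate s False @ True # v) ` B s"
  have "card (insert u ?U) \<le> Suc (card ?U)"
    using assms by (simp add: card_insert_if)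
  also have "card ?U \<le> (\<Sum>s\<in>A. card ((\<lambda>v. replicate s False @ True # v) ` B s))"
    by (rule card_UN_le[OF assms(1)])
  also have "\<dots> \<le> (\<Sum>s\<in>A. card (B s))"
    by (intro sum_mono card_image_le assms(2))
  finally show ?thesis by simp
qed

lemma card_gap_suffixes_le:
  assumes x: "1 \<le> x" and sums: "\<And>F. F \<subseteq> S \<Longrightarrow> finite F \<Longrightarrow> (\<Sum>s\<in>F. 1 / x ^ Suc s) \<le> 1"
  shows "real (card (gap_suffixes S m)) \<le> (real m + 1) * x ^ m"
proof (induction m rule: less_induct)
  case (less m)
  define F where "F = {s\<in>S. s < m}"
  have F: "finite F" "F \<subseteq> S" unfolding F_def by auto
  have "card (gap_suffixes S m) \<le> card (insert (replicate m False)
      (\<Union>s\<in>F. (\<lambda>v. replicate s False @ True # v) ` gap_suffixes S (m - Suc s)))"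
    using gap_suffixes_subset[of S m] unfolding F_def[symmetric]
    by (intro card_mono) (auto intro!: finite_UN_I F(1) finite_gap_suffixes)
  also have "\<dots> \<le> Suc (\<Sum>s\<in>F. card (gap_suffixes S (m - Suc s)))"
    by (rule card_insert_blocks_le[OF F(1) finite_gap_suffixes])
  finally have "real (card (gap_suffixes S m)) \<le> 1 + (\<Sum>s\<in>F. real (card (gap_suffixes S (m - Suc s))))"
    by (simp flip: of_nat_sum)
  also have "(\<Sum>s\<in>F. real (card (gap_suffixes S (m - Suc s)))) \<le> (\<Sum>s\<in>F. real m * x ^ m * (1 / x ^ Suc s))"
  proof (rule sum_mono)
    fix s assume "s \<in> F"
    then have s: "s < m" unfolding F_def by simp
    have "real (card (gap_suffixes S (m - Suc s))) \<le> (real (m - Suc s) + 1) * x ^ (m - Suc s)"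
      using s by (intro less) simp
    also have "\<dots> \<le> real m * x ^ (m - Suc s)"
      using s x by (intro mult_right_mono) (auto simp: of_nat_diff)
    also have "x ^ (m - Suc s) = x ^ m * (1 / x ^ Suc s)"
      using s x by (simp add: power_diff)
    finally show "real (card (gap_suffixes S (m - Suc s))) \<le> real m * x ^ m * (1 / x ^ Suc s)"
      by (simp add: mult.assoc)
  qed
  also have "\<dots> = real m * x ^ m * (\<Sum>s\<in>F. 1 / x ^ Suc s)"
    by (simp add: sum_distrib_left)
  also have "\<dots> \<le> real m * x ^ m"
    using sums[OF F(2,1)] x by (intro mult_left_le) auto
  moreover have "1 \<le> x ^ m" using x by (rule one_le_power)
  ultimately show ?case by (simp add: algebra_simps)
qed

lemma card_words_upper:
  assumes x: "1 \<le> x" and sums: "\<And>F. F \<subseteq> S \<Longrightarrow> finite F \<Longrightarrow> (\<Sum>s\<in>F. 1 / x ^ Suc s) \<le> 1"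
  shows "real (card (words n (gap_points S))) \<le> (real n + 1)^2 * x ^ n"
proof -
  have "card (words n (gap_points S)) \<le> card (insert (replicate n False)
      (\<Union>a<n. (\<lambda>v. replicate a False @ True # v) ` gap_suffixes S (n - Suc a)))"
    using words_subset_gap_suffixes[of n S]
    by (intro card_mono) (auto intro!: finite_UN_I finite_gap_suffixes)
  also have "\<dots> \<le> Suc (\<Sum>a<n. card (gap_suffixes S (n - Suc a)))"
    by (rule card_insert_blocks_le[OF finite_lessThan finite_gap_suffixes])
  finally have "real (card (words n (gap_points S))) \<le> 1 + (\<Sum>a<n. real (card (gap_suffixes S (n - Suc a))))"
    by (simp flip: of_nat_sum)
  also have "(\<Sum>a<n. real (card (gap_suffixes S (n - Suc a)))) \<le> (\<Sum>a<n. real n * x ^ n)"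
  proof (rule sum_mono)
    fix a assume "a \<in> {..<n}"
    then have a: "a < n" by simp
    have "real (card (gap_suffixes S (n - Suc a))) \<le> (real (n - Suc a) + 1) * x ^ (n - Suc a)"
      by (rule card_gap_suffixes_le[OF x sums])
    also have "\<dots> \<le> real n * x ^ n"
      using a x by (intro mult_mono power_increasing) (auto simp: of_nat_diff)
    finally show "real (card (gap_suffixes S (n - Suc a))) \<le> real n * x ^ n" .
  qed
  also have "1 + (\<Sum>a<n. real n * x ^ n) \<le> (real n + 1)^2 * x ^ n"
  proof -
    have "1 \<le> x ^ n" "0 \<le> real n * x ^ n" using one_le_power[OF x, of n] by simp_all
    moreover have "(real n + 1)^2 * x ^ n = real n * real n * x ^ n + 2 * (real n * x ^ n) + x ^ n"
      by (simp add: power2_eq_square algebra_simps)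
    moreover have "(\<Sum>a<n. real n * x ^ n) = real n * real n * x ^ n" by simp
    ultimately show ?thesis by linarith
  qed
  finally show ?thesis by simp
qed

subsection \<open>Lower bound on the number of words\<close>

definition block_prefixes :: "nat set \<Rightarrow> nat \<Rightarrow> bool list set" where
  "block_prefixes F n = {w. length w = n \<and> (\<exists>c. blocks F c \<and> c \<noteq> [] \<and> prefix w c)}"

lemma finite_block_prefixes: "finite (block_prefixes F n)"
  by (rule finite_subset[OF _ finite_bool_lists_length[of n]]) (auto simp: block_prefixes_def)

lemma block_prefixes_subset_words:
  assumes "F \<subseteq> S"
  shows "block_prefixes F n \<subseteq> words n (gap_points S)"
proof
  fix w assume "w \<in> block_prefixes F n"
  then obtain c where c: "length w = n" "blocks F c" "c \<noteq> []" "prefix w c"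
    by (auto simp: block_prefixes_def)
  have "take n (drop 0 c) \<in> words n (gap_points S)"
    using c prefix_length_le[OF c(4)] by (intro blocks_factor_in_words blocks_mono[OF _ assms]) auto
  moreover have "take n c = w" using c by (auto simp: prefix_def)
  ultimately show "w \<in> words n (gap_points S)" by simp
qed

lemma block_Cons_in_block_prefixes:
  assumes "s \<in> F" "w \<in> block_prefixes F n"
  shows "replicate s False @ True # w \<in> block_prefixes F (n + Suc s)"
proof -
  obtain c where "length w = n" "blocks F c" "prefix w c"
    using assms(2) by (auto simp: block_prefixes_def)
  then have "blocks F (replicate s False @ True # c)" "prefix (replicate s False @ True # w) (replicate s False @ True # c)"
    using assms(1) by (auto intro: blocks.intros)
  then show ?thesis using \<open>length w = n\<close> by (auto simp: block_prefixes_def)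
qed

lemma replicate_False_in_block_prefixes:
  assumes "s \<in> F" "n \<le> s"
  shows "replicate n False \<in> block_prefixes F n"
proof -
  have "blocks F (replicate s False @ [True])" using assms(1) by (intro blocks.intros)
  moreover have "prefix (replicate n False) (replicate s False @ [True])"
    using assms(2) by (metis prefix_append replicate_add le_add_diff_inverse prefix_order.refl)
  ultimately show ?thesis by (auto simp: block_prefixes_def)
qed

lemma sum_card_block_prefixes_le:
  assumes F: "finite F" and lt: "\<And>s. s \<in> F \<Longrightarrow> s < n"
  shows "(\<Sum>s\<in>F. card (block_prefixes F (n - Suc s))) \<le> card (block_prefixes F n)"
proof -
  let ?U = "\<Union>s\<in>F. (\<lambda>v. replicate s False @ True # v) ` block_prefixes F (n - Suc s)"
  have "(\<Sum>s\<in>F. card (block_prefixes F (n - Suc s))) = card ?U"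
    using F by (subst card_UN_disjoint) (auto simp: finite_block_prefixes card_image inj_on_def)
  also have "?U \<subseteq> block_prefixes F n"
    using block_Cons_in_block_prefixes lt by (fastforce simp: Suc_le_eq)
  then have "card ?U \<le> card (block_prefixes F n)"
    by (rule card_mono[OF finite_block_prefixes])
  finally show ?thesis .
qed

lemma card_block_prefixes_ge:
  assumes F: "finite F" and y: "1 \<le> y" and sum: "1 \<le> (\<Sum>s\<in>F. 1 / y ^ Suc s)"
  shows "y ^ n \<le> real (card (block_prefixes F n)) * y ^ Max F"
proof (induction n rule: less_induct)
  case (less n)
  have "F \<noteq> {}" using sum by auto
  then have maxF: "Max F \<in> F" using F by simp
  show ?case
  proof (cases "n \<le> Max F")
    case True
    then have "1 \<le> real (card (block_prefixes F n))"
      using replicate_False_in_block_prefixes[OF maxF] finite_block_prefixes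
      by (metis One_nat_def Suc_leI card_gt_0_iff empty_iff of_nat_1 of_nat_le_iff)
    then have "1 * y ^ Max F \<le> real (card (block_prefixes F n)) * y ^ Max F"
      using y by (intro mult_right_mono) auto
    moreover have "y ^ n \<le> y ^ Max F" using True y by (rule power_increasing)
    ultimately show ?thesis by simp
  next
    case False
    then have lt: "\<And>s. s \<in> F \<Longrightarrow> s < n" using Max_ge[OF F] by fastforce
    have "y ^ n \<le> y ^ n * (\<Sum>s\<in>F. 1 / y ^ Suc s)" using sum y by (simp add: mult_le_cancel_left1)
    also have "\<dots> = (\<Sum>s\<in>F. y ^ (n - Suc s))"
      unfolding sum_distrib_left using lt y by (intro sum.cong) (simp_all add: power_diff Suc_le_eq)
    also have "\<dots> \<le> (\<Sum>s\<in>F. real (card (block_prefixes F (n - Suc s))) * y ^ Max F)"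
      by (intro sum_mono less) (auto dest: lt)
    also have "\<dots> \<le> real (card (block_prefixes F n)) * y ^ Max F"
      using sum_card_block_prefixes_le[OF F lt] y
      by (simp add: sum_distrib_right[symmetric] mult_right_mono flip: of_nat_sum)
    finally show ?thesis .
  qed
qed

lemma card_words_lower:
  assumes "F \<subseteq> S" "finite F" "1 \<le> y" "1 \<le> (\<Sum>s\<in>F. 1 / y ^ Suc s)"
  shows "y ^ n \<le> real (card (words n (gap_points S))) * y ^ Max F"
proof -
  have "card (block_prefixes F n) \<le> card (words n (gap_points S))"
    by (rule card_mono[OF finite_words block_prefixes_subset_words[OF assms(1)]])
  then have "real (card (block_prefixes F n)) * y ^ Max F \<le> real (card (words n (gap_points S))) * y ^ Max F"
    using assms(3) by (intro mult_right_mono) auto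
  then show ?thesis using card_block_prefixes_ge[OF assms(2-4), of n] by linarith
qed

subsection \<open>The generating series and the critical value\<close>

definition gap_series :: "nat set \<Rightarrow> real \<Rightarrow> nat \<Rightarrow> real" where
  "gap_series S y j = (if j \<in> S then 1 else 0) / y ^ Suc j"

lemma sums_inverse_powers: "1 < (y::real) \<Longrightarrow> (\<lambda>j. 1 / y ^ Suc j) sums (1 / (y - 1))"
proof -
  assume y: "1 < y"
  have "(\<lambda>j. 1 / y * (1 / y) ^ j) sums (1 / y * (1 / (1 - 1 / y)))"
    using y by (intro sums_mult geometric_sums) auto
  moreover have "1 / y * (1 / (1 - 1 / y)) = 1 / (y - 1)" using y by (simp add: field_simps)
  ultimately show ?thesis by (simp add: power_one_over)
qed

lemma gap_series_nonneg: "0 \<le> y \<Longrightarrow> 0 \<le> gap_series S y j"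
  unfolding gap_series_def by simp

lemma gap_series_le_inverse_power: "0 < y \<Longrightarrow> gap_series S y j \<le> 1 / y ^ Suc j"
  unfolding gap_series_def by (simp add: divide_right_mono)

lemma summable_gap_series:
  assumes "1 < y"
  shows "summable (gap_series S y)"
proof (rule summable_comparison_test'[OF sums_summable[OF sums_inverse_powers[OF assms]]])
  fix n
  show "norm (gap_series S y n) \<le> 1 / y ^ Suc n"
    using assms gap_series_nonneg[of y S n] gap_series_le_inverse_power[of y S n] by simp
qed

lemma suminf_gap_series_le: "1 < y \<Longrightarrow> suminf (gap_series S y) \<le> 1 / (y - 1)"
  using suminf_le[OF gap_series_le_inverse_power summable_gap_series sums_summable[OF sums_inverse_powers]]
    sums_unique[OF sums_inverse_powers] by simp

lemma sum_gap_series_lessThan: "sum (gap_series S y) {..<N} = (\<Sum>s\<in>{s\<in>S. s < N}. 1 / y ^ Suc s)"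
proof -
  have "sum (gap_series S y) {..<N} = (\<Sum>s<N. if s \<in> S then 1 / y ^ Suc s else 0)"
    by (intro sum.cong) (auto simp: gap_series_def)
  also have "\<dots> = (\<Sum>s\<in>{s\<in>{..<N}. s \<in> S}. 1 / y ^ Suc s)"
    by (rule sum.inter_filter[OF finite_lessThan, symmetric])
  also have "{s\<in>{..<N}. s \<in> S} = {s\<in>S. s < N}" by blast
  finally show ?thesis .
qed

lemma sum_le_suminf_gap_series:
  assumes y: "1 < y" and F: "F \<subseteq> S" "finite F"
  shows "(\<Sum>s\<in>F. 1 / y ^ Suc s) \<le> suminf (gap_series S y)"
proof -
  have N: "F \<subseteq> {..<Suc (Max F)}" using Max_ge[OF F(2)] by (auto simp: less_Suc_eq_le)
  have "(\<Sum>s\<in>F. 1 / y ^ Suc s) = sum (gap_series S y) F"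
    using F(1) by (intro sum.cong) (auto simp: gap_series_def)
  also have "\<dots> \<le> sum (gap_series S y) {..<Suc (Max F)}"
    using N y by (intro sum_mono2 gap_series_nonneg) auto
  also have "\<dots> \<le> suminf (gap_series S y)"
    using y by (intro sum_le_suminf summable_gap_series gap_series_nonneg) auto
  finally show ?thesis .
qed

lemma finite_sum_gt_of_suminf_gap_series_gt:
  assumes "1 < y" "1 < suminf (gap_series S y)"
  obtains F where "F \<subseteq> S" "finite F" "1 < (\<Sum>s\<in>F. 1 / y ^ Suc s)"
proof -
  have "\<forall>\<^sub>F N in sequentially. 1 < sum (gap_series S y) {..<N}"
    using order_tendstoD(1)[OF summable_LIMSEQ[OF summable_gap_series[OF assms(1)]] assms(2)] .
  then obtain N where "1 < sum (gap_series S y) {..<N}" unfolding eventually_sequentially by blast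
  then show ?thesis using that[of "{s\<in>S. s < N}"] by (simp add: sum_gap_series_lessThan)
qed

lemma suminf_gap_series_strict_antimono:
  assumes "s \<in> S" "1 < y" "y < z"
  shows "suminf (gap_series S z) < suminf (gap_series S y)"
proof -
  have le: "gap_series S z j \<le> gap_series S y j" for j
    unfolding gap_series_def using assms by (intro divide_left_mono power_mono mult_pos_pos) auto
  have "y ^ Suc s < z ^ Suc s" using assms by (intro power_strict_mono) auto
  then have "1 / z ^ Suc s < 1 / y ^ Suc s"
    by (rule divide_strict_left_mono) (use assms in auto)
  then have "gap_series S z s < gap_series S y s"
    unfolding gap_series_def using assms(1) by simp
  then have "0 < (\<Sum>j. gap_series S y j - gap_series S z j)"
    using assms le by (intro suminf_pos2[of _ s] summable_diff summable_gap_series) auto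
  moreover have "1 < z" using assms by simp
  ultimately show ?thesis
    using suminf_diff[OF summable_gap_series[OF assms(2), of S] summable_gap_series[OF \<open>1 < z\<close>, of S]]
    by simp
qed

lemma isCont_suminf_gap_series:
  assumes y: "1 < y"
  shows "isCont (\<lambda>t. suminf (gap_series S t)) y"
proof -
  define c :: "nat \<Rightarrow> real" where "c j = (if j \<in> S then 1 else 0)" for j
  define K where "K = (1 + 1 / y) / 2"
  have K: "1 / y < K" "K < 1" "0 < K" using y unfolding K_def by (auto simp: field_simps)
  have "summable (\<lambda>n. c n * K ^ n)"
    using K y by (intro summable_comparison_test'[OF summable_geometric[of K]]) (auto simp: c_def)
  then have "isCont (\<lambda>t. 1 / t * (\<Sum>n. c n * (1 / t) ^ n)) y"
    using K y by (intro continuous_intros isCont_powser') auto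
  moreover have "\<forall>\<^sub>F t in nhds y. suminf (gap_series S t) = 1 / t * (\<Sum>n. c n * (1 / t) ^ n)"
  proof (rule eventually_mono[OF eventually_nhds_in_open[of "{1<..}" y]])
    fix t :: real assume "t \<in> {1<..}"
    then have "summable (\<lambda>n. c n * (1 / t) ^ n)"
      by (intro summable_comparison_test'[OF summable_geometric[of "1 / t"]]) (auto simp: c_def)
    moreover have "gap_series S t = (\<lambda>n. 1 / t * (c n * (1 / t) ^ n))"
      by (auto simp: gap_series_def c_def power_one_over)
    ultimately show "suminf (gap_series S t) = 1 / t * (\<Sum>n. c n * (1 / t) ^ n)"
      by (simp add: suminf_divide)
  qed (use y in auto)
  ultimately show ?thesis by (simp add: isCont_cong)
qed

text \<open>A supremum rather than a root of the series, so that it exists for every nonempty S: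
  for S = {0} the series equals 1/y, never reaches 1 on (1, \<infinity>), and gap_radius S = 1.\<close>

definition gap_radius :: "nat set \<Rightarrow> real" where
  "gap_radius S = Sup {y. 1 \<le> y \<and> (\<exists>F\<subseteq>S. finite F \<and> 1 \<le> (\<Sum>s\<in>F. 1 / y ^ Suc s))}"

lemma bdd_above_gap_radius_set:
  "bdd_above {y :: real. 1 \<le> y \<and> (\<exists>F\<subseteq>S. finite F \<and> 1 \<le> (\<Sum>s\<in>F. 1 / y ^ Suc s))}"
proof (rule bdd_aboveI[where M = 2])
  fix y :: real assume "y \<in> {y. 1 \<le> y \<and> (\<exists>F\<subseteq>S. finite F \<and> 1 \<le> (\<Sum>s\<in>F. 1 / y ^ Suc s))}"
  then obtain F where y: "1 \<le> y" "F \<subseteq> S" "finite F" "1 \<le> (\<Sum>s\<in>F. 1 / y ^ Suc s)" by blast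
  show "y \<le> 2"
  proof (rule ccontr)
    assume "\<not> y \<le> 2"
    then have y1: "1 < y" "1 / (y - 1) < 1" by auto
    have "(\<Sum>s\<in>F. 1 / y ^ Suc s) \<le> suminf (gap_series S y)"
      using y1(1) y(2,3) by (rule sum_le_suminf_gap_series)
    also have "\<dots> \<le> 1 / (y - 1)" using y1(1) by (rule suminf_gap_series_le)
    finally show False using y(4) y1(2) by linarith
  qed
qed

lemma le_gap_radius:
  assumes "1 \<le> y" "F \<subseteq> S" "finite F" "1 \<le> (\<Sum>s\<in>F. 1 / y ^ Suc s)"
  shows "y \<le> gap_radius S"
  unfolding gap_radius_def
  by (rule cSup_upper[OF _ bdd_above_gap_radius_set]) (use assms in auto)

lemma one_le_gap_radius: "s \<in> S \<Longrightarrow> 1 \<le> gap_radius S"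
  by (rule le_gap_radius[of 1 "{s}"]) auto

lemma gap_radius_le:
  assumes "s \<in> S"
    and "\<And>y F. 1 \<le> y \<Longrightarrow> F \<subseteq> S \<Longrightarrow> finite F \<Longrightarrow> 1 \<le> (\<Sum>s\<in>F. 1 / y ^ Suc s) \<Longrightarrow> y \<le> z"
  shows "gap_radius S \<le> z"
  unfolding gap_radius_def
proof (rule cSup_least)
  have "{s} \<subseteq> S" "finite {s}" "1 \<le> (\<Sum>t\<in>{s}. 1 / (1::real) ^ Suc t)"
    using assms(1) by auto
  then have "1 \<in> {y :: real. 1 \<le> y \<and> (\<exists>F\<subseteq>S. finite F \<and> 1 \<le> (\<Sum>s\<in>F. 1 / y ^ Suc s))}"
    unfolding mem_Collect_eq by (intro conjI order_refl exI[of _ "{s}"])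
  then show "{y :: real. 1 \<le> y \<and> (\<exists>F\<subseteq>S. finite F \<and> 1 \<le> (\<Sum>s\<in>F. 1 / y ^ Suc s))} \<noteq> {}"
    by blast
next
  fix y :: real assume "y \<in> {y. 1 \<le> y \<and> (\<exists>F\<subseteq>S. finite F \<and> 1 \<le> (\<Sum>s\<in>F. 1 / y ^ Suc s))}"
  then obtain F where "1 \<le> y" "F \<subseteq> S" "finite F" "1 \<le> (\<Sum>s\<in>F. 1 / y ^ Suc s)" by blast
  then show "y \<le> z" by (rule assms(2))
qed

lemma less_gap_radiusE:
  assumes "s \<in> S" "z < gap_radius S"
  obtains y F where "z < y" "1 \<le> y" "F \<subseteq> S" "finite F" "1 \<le> (\<Sum>s\<in>F. 1 / y ^ Suc s)"
proof -
  have "\<not> gap_radius S \<le> z" using assms(2) by simp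
  then obtain y F where "1 \<le> y" "F \<subseteq> S" "finite F" "1 \<le> (\<Sum>s\<in>F. 1 / y ^ Suc s)" "\<not> y \<le> z"
    using gap_radius_le[OF assms(1), of z] by blast
  then show ?thesis by (intro that[of y F]) auto
qed

lemma sum_less_one_if_gap_radius_less:
  "gap_radius S < x \<Longrightarrow> 1 \<le> x \<Longrightarrow> F \<subseteq> S \<Longrightarrow> finite F \<Longrightarrow> (\<Sum>s\<in>F. 1 / x ^ Suc s) < 1"
  using le_gap_radius[of x F S] by linarith

lemma le_gap_radius_if_suminf_gt:
  assumes "1 < y" "1 < suminf (gap_series S y)"
  shows "y \<le> gap_radius S"
proof -
  obtain F where "F \<subseteq> S" "finite F" "1 < (\<Sum>s\<in>F. 1 / y ^ Suc s)"
    using finite_sum_gt_of_suminf_gap_series_gt[OF assms] .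
  then show ?thesis using assms(1) by (intro le_gap_radius) auto
qed

lemma gap_radius_le_if_suminf_lt:
  assumes "s \<in> S" "1 < y" "suminf (gap_series S y) < 1"
  shows "gap_radius S \<le> y"
proof (rule gap_radius_le[OF assms(1)])
  fix y' :: real and F assume F: "F \<subseteq> S" "finite F" "1 \<le> (\<Sum>s\<in>F. 1 / y' ^ Suc s)"
  show "y' \<le> y"
  proof (rule ccontr)
    assume "\<not> y' \<le> y"
    then have "suminf (gap_series S y') < suminf (gap_series S y)"
      using assms by (intro suminf_gap_series_strict_antimono) auto
    moreover have "(\<Sum>s\<in>F. 1 / y' ^ Suc s) \<le> suminf (gap_series S y')"
      using F \<open>\<not> y' \<le> y\<close> assms(2) by (intro sum_le_suminf_gap_series) auto
    ultimately show False using F(3) assms(3) by linarith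
  qed
qed

lemma suminf_gap_series_eq_one_if_gap_radius_eq:
  assumes S: "s \<in> S" and lam: "1 < lam" and R: "gap_radius S = lam"
  shows "suminf (gap_series S lam) = 1"
proof (rule ccontr)
  let ?f = "\<lambda>t. suminf (gap_series S t)"
  have lim: "(?f \<longlongrightarrow> ?f lam) (at lam within A)" for A
    using isCont_tendsto_compose[OF isCont_suminf_gap_series[OF lam] tendsto_ident_at] .
  assume "?f lam \<noteq> 1"
  then consider "1 < ?f lam" | "?f lam < 1" by linarith
  then show False
  proof cases
    case 1
    have "\<forall>\<^sub>F t in at_right lam. lam < t \<and> 1 < ?f t"
      using eventually_at_right_less order_tendstoD(1)[OF lim 1] by (rule eventually_conj)
    then obtain t where "lam < t" "1 < ?f t"
      using eventually_happens'[OF trivial_limit_at_right_real] by blast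
    then show False using le_gap_radius_if_suminf_gt[of t S] lam R by simp
  next
    case 2
    have "\<forall>\<^sub>F t in at_left lam. t \<in> {1<..<lam} \<and> ?f t < 1"
      using eventually_at_left_real[OF lam] order_tendstoD(2)[OF lim 2] by (rule eventually_conj)
    then obtain t where "t \<in> {1<..<lam}" "?f t < 1"
      using eventually_happens'[OF trivial_limit_at_left_real] by blast
    then show False using gap_radius_le_if_suminf_lt[OF S, of t] R by simp
  qed
qed

lemma gap_radius_eq_if_suminf_gap_series_eq_one:
  assumes S: "s \<in> S" and lam: "1 < lam" and sum: "suminf (gap_series S lam) = 1"
  shows "gap_radius S = lam"
proof (rule antisym)
  show "gap_radius S \<le> lam"
  proof (rule dense_ge)
    fix y :: real assume "lam < y"
    then show "gap_radius S \<le> y"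
      using suminf_gap_series_strict_antimono[OF S lam] sum lam
      by (intro gap_radius_le_if_suminf_lt[OF S]) auto
  qed
  show "lam \<le> gap_radius S"
  proof (rule dense_le_bounded[OF lam])
    fix y :: real assume "1 < y" "y < lam"
    then show "y \<le> gap_radius S"
      using suminf_gap_series_strict_antimono[OF S, of y lam] sum
      by (intro le_gap_radius_if_suminf_gt) auto
  qed
qed

lemma gap_radius_eq_iff:
  assumes "s \<in> S" "1 < lam"
  shows "gap_radius S = lam \<longleftrightarrow> suminf (gap_series S lam) = 1"
  using suminf_gap_series_eq_one_if_gap_radius_eq[OF assms]
    gap_radius_eq_if_suminf_gap_series_eq_one[OF assms] by blast

subsection \<open>Entropy\<close>

lemma log_card_words_lower:
  assumes F: "F \<subseteq> S" "finite F" and y: "1 \<le> y" and sum: "1 \<le> (\<Sum>s\<in>F. 1 / y ^ Suc s)"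
    and n: "0 < n"
  shows "log 2 y - real (Max F) * log 2 y / real n \<le> log 2 (card (words n (gap_points S))) / real n"
proof -
  have "F \<noteq> {}" using sum by auto
  then have card: "0 < card (words n (gap_points S))"
    using F words_gap_points_nonempty finite_words by (metis card_gt_0_iff subset_empty subset_eq)
  have "y ^ n \<le> real (card (words n (gap_points S))) * y ^ Max F"
    by (rule card_words_lower[OF F y sum])
  then have "log 2 (y ^ n) \<le> log 2 (real (card (words n (gap_points S))) * y ^ Max F)"
    using y card by simp
  then have "real n * log 2 y \<le> log 2 (card (words n (gap_points S))) + real (Max F) * log 2 y"
    using y card by (simp add: log_mult log_nat_power)
  then have "(real n * log 2 y - real (Max F) * log 2 y) / real n
      \<le> log 2 (card (words n (gap_points S))) / real n"
    using n by (intro divide_right_mono) auto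
  moreover have "(real n * log 2 y - real (Max F) * log 2 y) / real n = log 2 y - real (Max F) * log 2 y / real n"
    using n by (simp add: diff_divide_distrib)
  ultimately show ?thesis by simp
qed

lemma log_card_words_upper:
  assumes S: "s \<in> S" and x: "1 \<le> x" and sums: "\<And>F. F \<subseteq> S \<Longrightarrow> finite F \<Longrightarrow> (\<Sum>s\<in>F. 1 / x ^ Suc s) \<le> 1"
    and n: "0 < n"
  shows "log 2 (card (words n (gap_points S))) / real n \<le> log 2 x + 2 * log 2 (real n + 1) / real n"
proof -
  have card: "0 < card (words n (gap_points S))"
    using words_gap_points_nonempty[OF S] finite_words card_gt_0_iff by blast
  have "real (card (words n (gap_points S))) \<le> (real n + 1)^2 * x ^ n"
    by (rule card_words_upper[OF x sums])
  then have "log 2 (card (words n (gap_points S))) \<le> log 2 ((real n + 1)^2 * x ^ n)"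
    using x card by simp
  then have "log 2 (card (words n (gap_points S))) \<le> 2 * log 2 (real n + 1) + real n * log 2 x"
    using x by (simp add: log_mult log_nat_power)
  then show ?thesis using n by (simp add: field_simps)
qed

lemma eventually_log_card_words_gt:
  assumes S: "s \<in> S" and e: "0 < e"
  shows "\<forall>\<^sub>F n in sequentially. log 2 (gap_radius S) - e < log 2 (card (words n (gap_points S))) / real n"
proof -
  define R where "R = gap_radius S"
  have R: "1 \<le> R" unfolding R_def using S by (rule one_le_gap_radius)
  have "R / 2 powr (e / 2) < R" using R e by (simp add: divide_less_eq)
  then obtain y F where y: "R / 2 powr (e / 2) < y" "1 \<le> y" and F: "F \<subseteq> S" "finite F"
    and sum: "1 \<le> (\<Sum>s\<in>F. 1 / y ^ Suc s)"
    using less_gap_radiusE[OF S] unfolding R_def by blast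
  have "log 2 (R / 2 powr (e / 2)) < log 2 y" using y R by (intro log_less) auto
  then have ly: "log 2 R - e / 2 < log 2 y" using R by (simp add: log_divide)
  have "\<forall>\<^sub>F n in sequentially. real (Max F) * log 2 y / real n < e / 2"
    using e by (intro order_tendstoD(2)[OF lim_const_over_n]) auto
  then show ?thesis using eventually_gt_at_top[of 0]
  proof eventually_elim
    case (elim n)
    then show ?case using log_card_words_lower[OF F y(2) sum elim(2)] ly unfolding R_def by linarith
  qed
qed

lemma eventually_log_card_words_lt:
  assumes S: "s \<in> S" and e: "0 < e"
  shows "\<forall>\<^sub>F n in sequentially. log 2 (card (words n (gap_points S))) / real n < log 2 (gap_radius S) + e"
proof -
  define R where "R = gap_radius S"
  have R: "1 \<le> R" unfolding R_def using S by (rule one_le_gap_radius)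
  define x where "x = R * 2 powr (e / 2)"
  have "1 < 2 powr (e / 2)" using e by simp
  then have "R < x" using R unfolding x_def by simp
  then have x: "R < x" "1 \<le> x" using R by simp_all
  have lx: "log 2 x = log 2 R + e / 2" using R unfolding x_def by (simp add: log_mult)
  have sums: "(\<Sum>s\<in>F. 1 / x ^ Suc s) \<le> 1" if "F \<subseteq> S" "finite F" for F
    using sum_less_one_if_gap_radius_less[of S x F] x that unfolding R_def by simp
  have "(\<lambda>n. 2 * log 2 (real n + 1) / real n) \<longlonglongrightarrow> 0"
    unfolding log_def by real_asymp
  then have "\<forall>\<^sub>F n in sequentially. 2 * log 2 (real n + 1) / real n < e / 2"
    using e by (intro order_tendstoD(2)) auto
  then show ?thesis using eventually_gt_at_top[of 0]
  proof eventually_elim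
    case (elim n)
    then show ?case using log_card_words_upper[OF S x(2) sums elim(2)] lx unfolding R_def by linarith
  qed
qed

lemma entropy_gap_shift:
  assumes S: "s \<in> S"
  shows "entropy (gap_shift S) = log 2 (gap_radius S)"
proof -
  have "(\<lambda>n. log 2 (card (words n (gap_points S))) / real n) \<longlonglongrightarrow> log 2 (gap_radius S)"
  proof (rule tendstoI)
    fix e :: real assume e: "0 < e"
    show "\<forall>\<^sub>F n in sequentially. dist (log 2 (card (words n (gap_points S))) / real n) (log 2 (gap_radius S)) < e"
      using eventually_log_card_words_gt[OF S e] eventually_log_card_words_lt[OF S e]
      by eventually_elim (auto simp: dist_real_def abs_less_iff)
  qed
  then show ?thesis unfolding entropy_def words_gap_shift by (rule limI)
qed

lemma entropy_gap_shift_eq_log_iff: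
  assumes S: "s \<in> S" and lam: "1 < lam"
  shows "entropy (gap_shift S) = log 2 lam \<longleftrightarrow> suminf (gap_series S lam) = 1"
proof -
  have "0 < gap_radius S" using one_le_gap_radius[OF S] by simp
  then have "log 2 (gap_radius S) = log 2 lam \<longleftrightarrow> gap_radius S = lam"
    using lam by (intro inj_on_eq_iff[OF log_inj]) auto
  then show ?thesis by (simp add: entropy_gap_shift[OF S] gap_radius_eq_iff[OF S lam])
qed

lemma gap_shifts_with_entropy_log:
  assumes lam: "1 < lam"
  shows "{X. \<exists>S. S \<noteq> {} \<and> X = gap_shift S \<and> entropy X = log 2 lam}
    = gap_shift ` {S. suminf (gap_series S lam) = 1}"
proof (intro equalityI subsetI)
  fix X assume "X \<in> {X. \<exists>S. S \<noteq> {} \<and> X = gap_shift S \<and> entropy X = log 2 lam}"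
  then obtain S s where "s \<in> S" "X = gap_shift S" "entropy X = log 2 lam" by blast
  then show "X \<in> gap_shift ` {S. suminf (gap_series S lam) = 1}"
    using entropy_gap_shift_eq_log_iff[OF _ lam] by blast
next
  fix X assume "X \<in> gap_shift ` {S. suminf (gap_series S lam) = 1}"
  then obtain S where S: "suminf (gap_series S lam) = 1" "X = gap_shift S" by blast
  then obtain s where "s \<in> S" by (cases "S = {}") (auto simp: gap_series_def[abs_def])
  then show "X \<in> {X. \<exists>S. S \<noteq> {} \<and> X = gap_shift S \<and> entropy X = log 2 lam}"
    using S entropy_gap_shift_eq_log_iff[OF _ lam] by blast
qed

theorem proposition4p1:
  fixes lam :: real
  assumes "1 < lam" and "lam < 2"
  shows "bij_betw (\<lambda>a. gap_shift {j. a j})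
           {a :: nat \<Rightarrow> bool. (\<Sum>j. (if a j then 1 else 0) / lam ^ Suc j) = 1}
           {X. \<exists>S. S \<noteq> {} \<and> X = gap_shift S \<and> entropy X = log 2 lam}"
proof -
  have "bij_betw (\<lambda>a. {j. a j}) {a :: nat \<Rightarrow> bool. (\<Sum>j. (if a j then 1 else 0) / lam ^ Suc j) = 1}
      {S. suminf (gap_series S lam) = 1}"
    by (rule bij_betw_byWitness[where f' = "\<lambda>S j. j \<in> S"]) (auto simp: gap_series_def[abs_def])
  moreover have "bij_betw gap_shift {S. suminf (gap_series S lam) = 1}
      {X. \<exists>S. S \<noteq> {} \<and> X = gap_shift S \<and> entropy X = log 2 lam}"
    using gap_shifts_with_entropy_log[OF assms(1)]
    by (intro bij_betw_imageI inj_on_subset[OF inj_gap_shift]) auto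
  ultimately show ?thesis by (auto dest: bij_betw_trans simp: comp_def)
qed

end
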